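(* For any $n\in\mathbb{N}$ and $A>0$, there exists $f\in C^2[-1,1]$ with $f\le0$ on $[-1,0]$ and $f\ge0$ on $[0,1]$, such that every algebraic polynomial $P_n$ of degree $\le n$ with $P_n\le0$ on $[-1,0]$, $P_n\ge0$ on $[0,1]$ and $P_n^{(i)}(0)=f^{(i)}(0)$ for $i=0,1$ obeys $$\|f-P_n\|>A\,\omega_4(f'',1).$$
   Context: $\|\cdot\|$ is the sup norm on $[-1,1]$; $\omega_4(g,t)$ is the fourth modulus of smoothness of $g$ on $[-1,1]$. *)

theory Defs
  imports "HOL-Analysis.Analysis" "HOL-Computational_Algebra.Polynomial"
begin

definition sup_norm11 :: "(real \<Rightarrow> real) \<Rightarrow> real" where
  "sup_norm11 g = (SUP x\<in>{-1..1}. \<bar>g x\<bar>)"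

definition diff4 :: "(real \<Rightarrow> real) \<Rightarrow> real \<Rightarrow> real \<Rightarrow> real" where
  "diff4 g h x = (\<Sum>i\<le>4. (-1) ^ (4 - i) * real (4 choose i) * g (x + real i * h))"

definition omega4 :: "(real \<Rightarrow> real) \<Rightarrow> real \<Rightarrow> real" where
  "omega4 g t = (SUP (h, x)\<in>{(h, x). 0 < h \<and> h \<le> t \<and> -1 \<le> x \<and> x + 4 * h \<le> 1}.
                    \<bar>diff4 g h x\<bar>)"

definition C2_on11 :: "(real \<Rightarrow> real) \<Rightarrow> (real \<Rightarrow> real) \<Rightarrow> (real \<Rightarrow> real) \<Rightarrow> bool" where
  "C2_on11 f f1 f2 \<longleftrightarrow>
     (\<forall>x\<in>{-1..1}. (f has_real_derivative f1 x) (at x within {-1..1})) \<and>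
     (\<forall>x\<in>{-1..1}. (f1 has_real_derivative f2 x) (at x within {-1..1})) \<and>
     continuous_on {-1..1} f2"

end

theory Submission
  imports Defs
begin

(* For small b > 0 take f = cex b = q + r, where q = cex_poly b and r = cex_rat b:
     q(x) = x^5 - 2 b^2 x^3 + 3/4 b^4 x = x ((x^2 - b^2)^2 - b^4/4),
     r(x) = b^4 x^3 / (x^2 + b^2) = b^5 rho(x/b),  rho(t) = t^3 / (t^2 + 1).
   Then f(x) = x * (nonnegative), which gives the sign conditions; |r| <= b^4 on [-1,1],
   and since fourth differences annihilate the cubic q'', omega_4(f'', 1) <= 16 sup |r''| = O(b^3).
   If P is admissible, D = P - q has D'(0) = 0, and the sign conditions on P force
   D(b) - D(-b) = P(b) - P(-b) + b^5/2 >= b^5/2.  On the other hand, on polynomials of bounded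
   degree the functional D(b) - D(-b) - 2 b D'(0) is O(||D|| b^3) (expand D in a Lagrange basis),
   and ||D|| <= ||f - P|| + b^4.  Hence ||f - P|| is of order b^2, which beats A omega_4(f'', 1)
   once b is small. *)

section \<open>Lagrange interpolation\<close>

definition lagrange_basis :: "'a::field set \<Rightarrow> 'a \<Rightarrow> 'a poly" where
  "lagrange_basis X x = smult (1 / (\<Prod>y\<in>X - {x}. x - y)) (\<Prod>y\<in>X - {x}. [:-y, 1:])"

lemma poly_lagrange_basis:
  assumes "finite X" "x \<in> X" "z \<in> X"
  shows "poly (lagrange_basis X x) z = (if z = x then 1 else 0)"
proof -
  have "(\<Prod>y\<in>X - {x}. x - y) \<noteq> 0" and "z \<noteq> x \<Longrightarrow> (\<Prod>y\<in>X - {x}. z - y) = 0"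
    using assms by auto
  then show ?thesis
    by (simp add: lagrange_basis_def poly_prod)
qed

lemma degree_lagrange_basis:
  assumes "finite X" "x \<in> X"
  shows "degree (lagrange_basis X x) < card X"
proof -
  have "degree (lagrange_basis X x) \<le> degree (\<Prod>y\<in>X - {x}. [:-y, 1:])"
    unfolding lagrange_basis_def by (rule degree_smult_le)
  also have "\<dots> \<le> (\<Sum>y\<in>X - {x}. degree [:-y, 1:])"
    using degree_prod_sum_le[of "X - {x}" "\<lambda>y. [:-y, 1:]"] assms by (simp add: o_def)
  also have "\<dots> = card X - 1"
    using assms by (simp add: card_Diff_singleton)
  also have "\<dots> < card X"
    using assms by (auto simp: card_gt_0_iff intro!: diff_less)
  finally show ?thesis .
qed

lemma lagrange_interpolation:
  assumes "finite X" "degree p < card X"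
  shows "p = (\<Sum>x\<in>X. smult (poly p x) (lagrange_basis X x))"
proof (rule poly_eqI_degree[of X])
  fix z assume "z \<in> X"
  have "poly (\<Sum>x\<in>X. smult (poly p x) (lagrange_basis X x)) z
      = (\<Sum>x\<in>X. poly p x * poly (lagrange_basis X x) z)"
    by (simp add: poly_sum)
  also have "\<dots> = (\<Sum>x\<in>X. if x = z then poly p x else 0)"
    using assms(1) \<open>z \<in> X\<close> by (intro sum.cong) (auto simp: poly_lagrange_basis)
  also have "\<dots> = poly p z"
    using assms(1) \<open>z \<in> X\<close> by simp
  finally show "poly p z = poly (\<Sum>x\<in>X. smult (poly p x) (lagrange_basis X x)) z" ..
next
  show "degree (\<Sum>x\<in>X. smult (poly p x) (lagrange_basis X x)) < card X"
    using assms degree_lagrange_basis degree_smult_le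
    by (intro degree_sum_less) (auto intro: le_less_trans)
qed (fact assms)

section \<open>A Markov-type bound for the odd remainder\<close>

definition odd_remainder :: "real poly \<Rightarrow> real \<Rightarrow> real" where
  "odd_remainder q b = poly q b - poly q (-b) - 2 * b * coeff q 1"

definition coeff_abs_sum :: "real poly \<Rightarrow> real" where
  "coeff_abs_sum q = (\<Sum>k\<le>degree q. \<bar>coeff q k\<bar>)"

lemma coeff_abs_sum_nonneg: "coeff_abs_sum q \<ge> 0"
  unfolding coeff_abs_sum_def by (simp add: sum_nonneg)

lemma abs_odd_remainder_monomial_le:
  fixes b :: real
  assumes "\<bar>b\<bar> \<le> 1"
  shows "\<bar>b ^ k - (-b) ^ k - (if k = 1 then 2 * b else 0)\<bar> \<le> 2 * \<bar>b\<bar> ^ 3"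
proof (cases "k \<le> 2")
  case True
  then have "k = 0 \<or> k = 1 \<or> k = 2" by auto
  then show ?thesis by auto
next
  case False
  have "\<bar>b ^ k - (-b) ^ k\<bar> \<le> \<bar>b\<bar> ^ k + \<bar>b\<bar> ^ k"
    by (metis abs_minus_cancel abs_triangle_ineq4 power_abs)
  also have "\<bar>b\<bar> ^ k \<le> \<bar>b\<bar> ^ 3"
    using False assms by (intro power_decreasing) auto
  finally show ?thesis using False by auto
qed

lemma odd_remainder_altdef:
  "odd_remainder q b = (\<Sum>k\<le>degree q. coeff q k * (b ^ k - (-b) ^ k - (if k = 1 then 2 * b else 0)))"
proof -
  have coeff_1: "coeff q 1 = (\<Sum>k\<le>degree q. if k = 1 then coeff q k else 0)"
    by (cases "degree q = 0") (auto simp: coeff_eq_0)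
  have termwise: "\<And>k. coeff q k * (b ^ k - (-b) ^ k - (if k = 1 then 2 * b else 0))
      = coeff q k * b ^ k - coeff q k * (-b) ^ k - 2 * b * (if k = 1 then coeff q k else 0)"
    by (simp add: algebra_simps)
  show ?thesis
    unfolding termwise sum_subtractf sum_distrib_left[symmetric] odd_remainder_def poly_altdef
      coeff_1[symmetric] ..
qed

lemma abs_odd_remainder_le:
  assumes "\<bar>b\<bar> \<le> 1"
  shows "\<bar>odd_remainder q b\<bar> \<le> 2 * coeff_abs_sum q * \<bar>b\<bar> ^ 3"
proof -
  have "\<bar>odd_remainder q b\<bar> \<le> (\<Sum>k\<le>degree q. \<bar>coeff q k\<bar> * (2 * \<bar>b\<bar> ^ 3))"
    unfolding odd_remainder_altdef
    by (rule order_trans[OF sum_abs sum_mono])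
      (simp only: abs_mult, intro mult_left_mono abs_odd_remainder_monomial_le assms abs_ge_zero)
  also have "\<dots> = 2 * coeff_abs_sum q * \<bar>b\<bar> ^ 3"
    by (simp add: coeff_abs_sum_def sum_distrib_left[symmetric] sum_distrib_right[symmetric] mult_ac)
  finally show ?thesis .
qed

lemma odd_remainder_sum_smult:
  "odd_remainder (\<Sum>x\<in>X. smult (c x) (p x)) b = (\<Sum>x\<in>X. c x * odd_remainder (p x) b)"
  by (simp add: odd_remainder_def poly_sum coeff_sum sum_subtractf sum_distrib_left algebra_simps
      sum.distrib)

lemma abs_odd_remainder_le_nodes:
  assumes "finite X" "degree p < card X" "\<And>x. x \<in> X \<Longrightarrow> \<bar>poly p x\<bar> \<le> B" "\<bar>b\<bar> \<le> 1"
  shows "\<bar>odd_remainder p b\<bar> \<le> 2 * B * (\<Sum>x\<in>X. coeff_abs_sum (lagrange_basis X x)) * \<bar>b\<bar> ^ 3"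
proof -
  have "odd_remainder p b = (\<Sum>x\<in>X. poly p x * odd_remainder (lagrange_basis X x) b)"
    by (subst lagrange_interpolation[OF assms(1,2)]) (rule odd_remainder_sum_smult)
  also have "\<bar>\<dots>\<bar> \<le> (\<Sum>x\<in>X. B * (2 * coeff_abs_sum (lagrange_basis X x) * \<bar>b\<bar> ^ 3))"
    by (rule order_trans[OF sum_abs sum_mono])
      (simp only: abs_mult, intro mult_mono' assms(3) abs_odd_remainder_le[OF assms(4)] abs_ge_zero)
  also have "\<dots> = 2 * B * (\<Sum>x\<in>X. coeff_abs_sum (lagrange_basis X x)) * \<bar>b\<bar> ^ 3"
    by (simp add: sum_distrib_left sum_distrib_right mult_ac)
  finally show ?thesis .
qed

lemma odd_remainder_bound:
  obtains K :: real where "K > 0" and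
    "\<And>p B b. degree p \<le> N \<Longrightarrow> (\<And>x. x \<in> {-1..1} \<Longrightarrow> \<bar>poly p x\<bar> \<le> B) \<Longrightarrow> \<bar>b\<bar> \<le> 1 \<Longrightarrow>
      \<bar>odd_remainder p b\<bar> \<le> K * B * \<bar>b\<bar> ^ 3"
proof
  define X where "X = (\<lambda>k. real k / real (Suc N)) ` {..N}"
  have "finite X" and card_X: "card X = Suc N" and X_sub: "X \<subseteq> {-1..1}"
    unfolding X_def by (auto simp: card_image inj_on_def field_simps)
  define S where "S = (\<Sum>x\<in>X. coeff_abs_sum (lagrange_basis X x))"
  have "S \<ge> 0"
    unfolding S_def by (simp add: sum_nonneg coeff_abs_sum_nonneg)
  then show "2 * S + 1 > 0" by simp
  fix p :: "real poly" and B b :: real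
  assume "degree p \<le> N" and p_bound: "\<And>x. x \<in> {-1..1} \<Longrightarrow> \<bar>poly p x\<bar> \<le> B" and "\<bar>b\<bar> \<le> 1"
  have "B \<ge> 0"
    using p_bound[of 0] by (simp add: order_trans[OF abs_ge_zero])
  have "\<bar>odd_remainder p b\<bar> \<le> 2 * B * S * \<bar>b\<bar> ^ 3"
    unfolding S_def using \<open>finite X\<close> \<open>degree p \<le> N\<close> card_X X_sub \<open>\<bar>b\<bar> \<le> 1\<close>
    by (intro abs_odd_remainder_le_nodes) (auto intro: p_bound)
  also have "\<dots> \<le> (2 * S + 1) * B * \<bar>b\<bar> ^ 3"
    using \<open>B \<ge> 0\<close> by (intro mult_right_mono) (auto simp: algebra_simps)
  finally show "\<bar>odd_remainder p b\<bar> \<le> (2 * S + 1) * B * \<bar>b\<bar> ^ 3" .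
qed

section \<open>Fourth differences and the modulus of smoothness\<close>

lemma diff4_expand:
  "diff4 g h x = g x - 4 * g (x + h) + 6 * g (x + 2 * h) - 4 * g (x + 3 * h) + g (x + 4 * h)"
  unfolding diff4_def by (simp add: eval_nat_numeral atMost_Suc algebra_simps)

lemma diff4_add: "diff4 (\<lambda>y. g y + k y) h x = diff4 g h x + diff4 k h x"
  unfolding diff4_expand by simp

lemma diff4_poly_degree_le_3:
  assumes "degree p \<le> 3"
  shows "diff4 (poly p) h x = 0"
proof -
  have "poly p y = (\<Sum>i\<le>3. coeff p i * y ^ i)" for y
    unfolding poly_altdef using assms
    by (intro sum.mono_neutral_left) (auto simp: coeff_eq_0)
  then have cubic: "poly p = (\<lambda>y. coeff p 0 + coeff p 1 * y + coeff p 2 * y ^ 2 + coeff p 3 * y ^ 3)"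
    by (simp add: eval_nat_numeral atMost_Suc fun_eq_iff)
  show ?thesis
    unfolding diff4_expand cubic by algebra
qed

lemma abs_diff4_le:
  assumes "\<And>y. \<bar>g y\<bar> \<le> c"
  shows "\<bar>diff4 g h x\<bar> \<le> 16 * c"
  unfolding diff4_expand
  using assms[of x] assms[of "x + h"] assms[of "x + 2 * h"] assms[of "x + 3 * h"] assms[of "x + 4 * h"]
  by linarith

lemma omega4_le:
  assumes "t > 0" and "\<And>h x. 0 < h \<Longrightarrow> h \<le> t \<Longrightarrow> -1 \<le> x \<Longrightarrow> x + 4 * h \<le> 1 \<Longrightarrow> \<bar>diff4 g h x\<bar> \<le> c"
  shows "omega4 g t \<le> c"
  unfolding omega4_def
proof (rule cSUP_least)
  have "(min t (1/4), -1) \<in> {(h, x). 0 < h \<and> h \<le> t \<and> -1 \<le> x \<and> x + 4 * h \<le> 1}"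
    using assms(1) by auto
  then show "{(h, x). 0 < h \<and> h \<le> t \<and> -1 \<le> x \<and> x + 4 * h \<le> 1} \<noteq> {}"
    by blast
qed (use assms(2) in auto)

lemma abs_le_sup_norm11:
  assumes "continuous_on {-1..1} g" "x \<in> {-1..1}"
  shows "\<bar>g x\<bar> \<le> sup_norm11 g"
  unfolding sup_norm11_def
proof (rule cSUP_upper[OF assms(2)])
  show "bdd_above ((\<lambda>x. \<bar>g x\<bar>) ` {-1..1})"
    by (intro bounded_imp_bdd_above compact_imp_bounded compact_continuous_image compact_Icc
        continuous_intros assms(1))
qed

lemma C2_on11_continuous_on: "C2_on11 f f1 f2 \<Longrightarrow> continuous_on {-1..1} f"
  unfolding C2_on11_def by (blast intro: DERIV_continuous_on)

section \<open>The extremal function\<close>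

definition cex_poly :: "real \<Rightarrow> real poly" where
  "cex_poly b = [:0, 3/4 * b ^ 4, 0, -2 * b ^ 2, 0, 1:]"

definition cex_rat :: "real \<Rightarrow> real \<Rightarrow> real" where
  "cex_rat b x = b ^ 4 * x ^ 3 / (x\<^sup>2 + b\<^sup>2)"

definition cex_rat' :: "real \<Rightarrow> real \<Rightarrow> real" where
  "cex_rat' b x = b ^ 4 * (x ^ 4 + 3 * b\<^sup>2 * x\<^sup>2) / (x\<^sup>2 + b\<^sup>2)\<^sup>2"

definition cex_rat'' :: "real \<Rightarrow> real \<Rightarrow> real" where
  "cex_rat'' b x = 2 * b ^ 6 * x * (3 * b\<^sup>2 - x\<^sup>2) / (x\<^sup>2 + b\<^sup>2) ^ 3"

definition cex :: "real \<Rightarrow> real \<Rightarrow> real" where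
  "cex b x = poly (cex_poly b) x + cex_rat b x"

definition cex' :: "real \<Rightarrow> real \<Rightarrow> real" where
  "cex' b x = poly (pderiv (cex_poly b)) x + cex_rat' b x"

definition cex'' :: "real \<Rightarrow> real \<Rightarrow> real" where
  "cex'' b x = poly (pderiv (pderiv (cex_poly b))) x + cex_rat'' b x"

lemma cex_denom_pos: "b \<noteq> 0 \<Longrightarrow> x\<^sup>2 + b\<^sup>2 > (0::real)"
  by (simp add: add_nonneg_pos)

lemma has_real_derivative_cex_rat:
  assumes "b \<noteq> 0"
  shows "(cex_rat b has_real_derivative cex_rat' b x) (at x)"
proof -
  have nz: "x\<^sup>2 + b\<^sup>2 \<noteq> 0"
    using cex_denom_pos[OF assms, of x] by linarith
  show ?thesis
    unfolding cex_rat_def[abs_def] cex_rat'_def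
    by (rule derivative_eq_intros refl | simp add: nz assms)+ (simp add: nz divide_simps, algebra)
qed

lemma has_real_derivative_cex_rat':
  assumes "b \<noteq> 0"
  shows "(cex_rat' b has_real_derivative cex_rat'' b x) (at x)"
proof -
  have nz: "x\<^sup>2 + b\<^sup>2 \<noteq> 0"
    using cex_denom_pos[OF assms, of x] by linarith
  show ?thesis
    unfolding cex_rat'_def[abs_def] cex_rat''_def
    by (rule derivative_eq_intros refl | simp add: nz assms)+ (simp add: nz divide_simps, algebra)
qed

lemma continuous_on_cex_rat'': "b \<noteq> 0 \<Longrightarrow> continuous_on S (cex_rat'' b)"
  unfolding cex_rat''_def by (intro continuous_intros) (use cex_denom_pos in force)

lemma C2_on11_cex:
  assumes "b \<noteq> 0"
  shows "C2_on11 (cex b) (cex' b) (cex'' b)"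
proof -
  have "(cex b has_real_derivative cex' b x) (at x)" for x
    unfolding cex_def[abs_def] cex'_def
    by (intro derivative_intros poly_DERIV has_real_derivative_cex_rat assms)
  moreover have "(cex' b has_real_derivative cex'' b x) (at x)" for x
    unfolding cex'_def[abs_def] cex''_def
    by (intro derivative_intros poly_DERIV has_real_derivative_cex_rat' assms)
  moreover have "continuous_on {-1..1} (cex'' b)"
    unfolding cex''_def[abs_def]
    by (intro continuous_intros continuous_on_cex_rat'' assms)
  ultimately show ?thesis
    unfolding C2_on11_def by (blast intro: has_field_derivative_at_within)
qed

lemma cex_factor:
  assumes "b \<noteq> 0"
  shows "cex b x = x * ((x\<^sup>2 - b\<^sup>2)\<^sup>2 - b ^ 4 / 4 + b ^ 4 * x\<^sup>2 / (x\<^sup>2 + b\<^sup>2))"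
proof -
  have "poly (cex_poly b) x = x * ((x\<^sup>2 - b\<^sup>2)\<^sup>2 - b ^ 4 / 4)"
    by (simp add: cex_poly_def) algebra
  moreover have "cex_rat b x = x * (b ^ 4 * x\<^sup>2 / (x\<^sup>2 + b\<^sup>2))"
    by (simp add: cex_rat_def power2_eq_square power3_eq_cube)
  ultimately show ?thesis
    by (simp add: cex_def distrib_left)
qed

lemma cex_cofactor_nonneg:
  fixes b x :: real
  assumes "b \<noteq> 0"
  shows "(x\<^sup>2 - b\<^sup>2)\<^sup>2 - b ^ 4 / 4 + b ^ 4 * x\<^sup>2 / (x\<^sup>2 + b\<^sup>2) \<ge> 0"
proof (cases "x\<^sup>2 \<le> b\<^sup>2 / 2")
  case True
  then have "(b\<^sup>2 / 2)\<^sup>2 \<le> (b\<^sup>2 - x\<^sup>2)\<^sup>2"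
    by (intro power_mono) auto
  then have "b ^ 4 / 4 \<le> (x\<^sup>2 - b\<^sup>2)\<^sup>2"
    by (simp add: power2_eq_square power4_eq_xxxx algebra_simps)
  moreover have "b ^ 4 * x\<^sup>2 / (x\<^sup>2 + b\<^sup>2) \<ge> 0"
    by simp
  ultimately show ?thesis by linarith
next
  case False
  with cex_denom_pos[OF assms, of x] have "x\<^sup>2 / (x\<^sup>2 + b\<^sup>2) \<ge> 1 / 3"
    by (simp add: field_simps)
  then have "b ^ 4 * (x\<^sup>2 / (x\<^sup>2 + b\<^sup>2)) \<ge> b ^ 4 * (1 / 3)"
    by (intro mult_left_mono) auto
  moreover have "b ^ 4 * x\<^sup>2 / (x\<^sup>2 + b\<^sup>2) = b ^ 4 * (x\<^sup>2 / (x\<^sup>2 + b\<^sup>2))" and "b ^ 4 \<ge> 0"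
    by simp_all
  ultimately show ?thesis
    using zero_le_power2[of "x\<^sup>2 - b\<^sup>2"] by linarith
qed

lemma cex_nonpos: "b \<noteq> 0 \<Longrightarrow> x \<le> 0 \<Longrightarrow> cex b x \<le> 0"
  by (simp add: cex_factor cex_cofactor_nonneg mult_nonpos_nonneg)

lemma cex_nonneg: "b \<noteq> 0 \<Longrightarrow> x \<ge> 0 \<Longrightarrow> cex b x \<ge> 0"
  by (simp add: cex_factor cex_cofactor_nonneg)

lemma abs_cex_rat_le:
  assumes "b \<noteq> 0" "\<bar>x\<bar> \<le> 1"
  shows "\<bar>cex_rat b x\<bar> \<le> b ^ 4"
proof -
  have "\<bar>x ^ 3\<bar> \<le> x\<^sup>2"
    using assms(2) by (simp add: power3_eq_cube power2_eq_square abs_mult mult_left_le)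
  also have "\<dots> \<le> x\<^sup>2 + b\<^sup>2"
    by simp
  finally have "\<bar>x ^ 3 / (x\<^sup>2 + b\<^sup>2)\<bar> \<le> 1"
    using cex_denom_pos[OF assms(1), of x] by (simp add: abs_divide)
  then have "b ^ 4 * \<bar>x ^ 3 / (x\<^sup>2 + b\<^sup>2)\<bar> \<le> b ^ 4 * 1"
    by (intro mult_left_mono) auto
  then show ?thesis
    unfolding cex_rat_def by (simp add: abs_mult)
qed

lemma abs_cex_rat''_le:
  assumes "b > 0"
  shows "\<bar>cex_rat'' b x\<bar> \<le> 6 * b ^ 3"
proof -
  let ?s = "x\<^sup>2 + b\<^sup>2"
  have "2 * (\<bar>x\<bar> * b) \<le> ?s" and "0 \<le> \<bar>x\<bar> * b"
    using sum_squares_bound[of "\<bar>x\<bar>" b] assms by (simp_all add: algebra_simps)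
  then have "\<bar>x\<bar> * b \<le> ?s"
    by linarith
  moreover have "b\<^sup>2 \<le> ?s" and "\<bar>3 * b\<^sup>2 - x\<^sup>2\<bar> \<le> 3 * ?s"
    by (auto simp: abs_le_iff)
  ultimately have factors: "(\<bar>x\<bar> * b) * b\<^sup>2 * \<bar>3 * b\<^sup>2 - x\<^sup>2\<bar> \<le> ?s * ?s * (3 * ?s)"
    by (intro mult_mono) auto
  have "\<bar>2 * b ^ 6 * x * (3 * b\<^sup>2 - x\<^sup>2)\<bar> = 2 * b ^ 3 * ((\<bar>x\<bar> * b) * b\<^sup>2 * \<bar>3 * b\<^sup>2 - x\<^sup>2\<bar>)"
    using assms by (simp add: abs_mult) algebra
  also have "\<dots> \<le> 2 * b ^ 3 * (?s * ?s * (3 * ?s))"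
    using factors assms by (intro mult_left_mono) auto
  also have "\<dots> = 6 * b ^ 3 * ?s ^ 3"
    by algebra
  finally have "\<bar>2 * b ^ 6 * x * (3 * b\<^sup>2 - x\<^sup>2)\<bar> \<le> 6 * b ^ 3 * ?s ^ 3" .
  moreover have "?s > 0"
    using cex_denom_pos[of b x] assms by simp
  ultimately show ?thesis
    unfolding cex_rat''_def by (simp add: abs_divide divide_le_eq)
qed

lemma omega4_cex'':
  assumes "b > 0" "t > 0"
  shows "omega4 (cex'' b) t \<le> 96 * b ^ 3"
proof (rule omega4_le[OF assms(2)])
  fix h x
  have "degree (pderiv (pderiv (cex_poly b))) \<le> 3"
    by (simp add: degree_pderiv cex_poly_def)
  then have "diff4 (cex'' b) h x = diff4 (cex_rat'' b) h x"
    unfolding cex''_def[abs_def] diff4_add by (simp add: diff4_poly_degree_le_3)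
  also have "\<bar>\<dots>\<bar> \<le> 16 * (6 * b ^ 3)"
    by (intro abs_diff4_le abs_cex_rat''_le assms(1))
  finally show "\<bar>diff4 (cex'' b) h x\<bar> \<le> 96 * b ^ 3"
    by simp
qed

lemma odd_remainder_diff_cex_poly_ge:
  assumes "poly P b \<ge> 0" "poly P (-b) \<le> 0" "poly (pderiv P) 0 = cex' b 0"
  shows "odd_remainder (P - cex_poly b) b \<ge> b ^ 5 / 2"
proof -
  have "coeff P 1 = coeff (cex_poly b) 1"
    using assms(3) by (simp add: cex'_def cex_rat'_def poly_0_coeff_0 coeff_pderiv)
  then have "odd_remainder (P - cex_poly b) b = poly P b - poly P (-b) + b ^ 5 / 2"
    by (simp add: odd_remainder_def cex_poly_def) algebra
  with assms(1,2) show ?thesis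
    by simp
qed

lemma abs_poly_diff_cex_poly_le:
  assumes "b > 0" "x \<in> {-1..1}"
  shows "\<bar>poly (P - cex_poly b) x\<bar> \<le> sup_norm11 (\<lambda>x. cex b x - poly P x) + b ^ 4"
proof -
  have "\<bar>cex b x - poly P x\<bar> \<le> sup_norm11 (\<lambda>x. cex b x - poly P x)"
    using C2_on11_continuous_on[OF C2_on11_cex] assms
    by (intro abs_le_sup_norm11 continuous_intros) auto
  moreover have "\<bar>cex_rat b x\<bar> \<le> b ^ 4"
    using abs_cex_rat_le assms by auto
  moreover have "poly (P - cex_poly b) x = cex_rat b x - (cex b x - poly P x)"
    by (simp add: cex_def)
  ultimately show ?thesis
    by linarith
qed

lemma cex_approximation_error:
  assumes markov: "\<And>p B c. degree p \<le> N \<Longrightarrow> (\<And>x. x \<in> {-1..1} \<Longrightarrow> \<bar>poly p x\<bar> \<le> B) \<Longrightarrow>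
      \<bar>c\<bar> \<le> 1 \<Longrightarrow> \<bar>odd_remainder p c\<bar> \<le> K * B * \<bar>c\<bar> ^ 3"
    and "b > 0" "b \<le> 1" "degree P \<le> N" "5 \<le> N"
    and "\<forall>x\<in>{-1..0}. poly P x \<le> 0" "\<forall>x\<in>{0..1}. poly P x \<ge> 0" "poly (pderiv P) 0 = cex' b 0"
  shows "b\<^sup>2 \<le> 2 * K * (sup_norm11 (\<lambda>x. cex b x - poly P x) + b ^ 4)"
proof -
  let ?M = "sup_norm11 (\<lambda>x. cex b x - poly P x)"
  have "degree (P - cex_poly b) \<le> N"
    using assms(4,5) degree_diff_le_max[of P "cex_poly b"] by (simp add: cex_poly_def)
  have "poly P b \<ge> 0" and "poly P (-b) \<le> 0"
    using assms(2,3,6,7) by simp_all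
  then have "b ^ 5 / 2 \<le> odd_remainder (P - cex_poly b) b"
    using assms(8) by (rule odd_remainder_diff_cex_poly_ge)
  also have "\<dots> \<le> \<bar>odd_remainder (P - cex_poly b) b\<bar>"
    by (rule abs_ge_self)
  also have "\<dots> \<le> K * (?M + b ^ 4) * \<bar>b\<bar> ^ 3"
    using assms(2,3)
    by (intro markov \<open>degree (P - cex_poly b) \<le> N\<close> abs_poly_diff_cex_poly_le) auto
  finally have "b ^ 3 * b\<^sup>2 \<le> b ^ 3 * (2 * K * (?M + b ^ 4))"
    using assms(2) by (simp add: power_add[symmetric] algebra_simps)
  then show ?thesis
    by (rule mult_left_le_imp_le) (use assms(2) in simp)
qed

lemma small_scale_gap:
  fixes A b K M :: real
  assumes "A \<ge> 0" "K > 0" "b > 0" "b \<le> 1" "b * (8 * K * (1 + 96 * A)) \<le> 1"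
    and "b\<^sup>2 \<le> 2 * K * (M + b ^ 4)"
  shows "96 * A * b ^ 3 < M"
proof -
  have "K * b + K * b * (96 * A) \<le> 1 / 8" and "K * b * (96 * A) \<ge> 0" and "K * b \<ge> 0"
    using assms(1-3,5) by (simp_all add: algebra_simps)
  then have Kb: "K * b \<le> 1 / 8" and KbA: "K * b * (96 * A) \<le> 1 / 8"
    by linarith+
  have "K * b ^ 4 = (K * b) * b ^ 3"
    by algebra
  also have "\<dots> \<le> 1 / 8 * b\<^sup>2"
    using Kb assms(3,4) by (intro mult_mono) (auto simp: power_decreasing)
  finally have "K * b ^ 4 \<le> b\<^sup>2 / 8"
    by simp
  moreover have "K * (96 * A * b ^ 3) = (K * b * (96 * A)) * b\<^sup>2"
    by algebra
  moreover have "(K * b * (96 * A)) * b\<^sup>2 \<le> 1 / 8 * b\<^sup>2"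
    using KbA by (intro mult_right_mono) auto
  moreover have "b\<^sup>2 > 0"
    using assms(3) by simp
  moreover have "b\<^sup>2 \<le> 2 * (K * M) + 2 * (K * b ^ 4)"
    using assms(6) by (simp add: algebra_simps)
  ultimately have "K * (96 * A * b ^ 3) < K * M"
    by linarith
  then show ?thesis
    using assms(2) by simp
qed

theorem lemma3p11:
  fixes n :: nat and A :: real
  assumes "A > 0"
  shows "\<exists>f f1 f2. C2_on11 f f1 f2 \<and>
           (\<forall>x\<in>{-1..0}. f x \<le> 0) \<and> (\<forall>x\<in>{0..1}. f x \<ge> 0) \<and>
           (\<forall>P :: real poly. degree P \<le> n \<and>
                (\<forall>x\<in>{-1..0}. poly P x \<le> 0) \<and> (\<forall>x\<in>{0..1}. poly P x \<ge> 0) \<and>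
                poly P 0 = f 0 \<and> poly (pderiv P) 0 = f1 0
              \<longrightarrow> sup_norm11 (\<lambda>x. f x - poly P x) > A * omega4 f2 1)"
proof -
  obtain K where "K > 0" and markov: "\<And>p B c. degree p \<le> n + 5 \<Longrightarrow>
      (\<And>x. x \<in> {-1..1} \<Longrightarrow> \<bar>poly p x\<bar> \<le> B) \<Longrightarrow> \<bar>c\<bar> \<le> 1 \<Longrightarrow>
      \<bar>odd_remainder p c\<bar> \<le> K * B * \<bar>c\<bar> ^ 3"
    using odd_remainder_bound by blast
  define b where "b = min 1 (1 / (8 * K * (1 + 96 * A)))"
  have "8 * K * (1 + 96 * A) > 0"
    using \<open>K > 0\<close> assms by simp
  then have "b > 0" and "b \<le> 1"
    by (simp_all add: b_def)
  have "b \<le> 1 / (8 * K * (1 + 96 * A))"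
    by (simp add: b_def)
  with \<open>8 * K * (1 + 96 * A) > 0\<close> have "b * (8 * K * (1 + 96 * A)) \<le> 1"
    by (simp add: le_divide_eq)
  have error_gt: "sup_norm11 (\<lambda>x. cex b x - poly P x) > A * omega4 (cex'' b) 1"
    if "degree P \<le> n" "\<forall>x\<in>{-1..0}. poly P x \<le> 0" "\<forall>x\<in>{0..1}. poly P x \<ge> 0"
      "poly (pderiv P) 0 = cex' b 0" for P
  proof -
    have "b\<^sup>2 \<le> 2 * K * (sup_norm11 (\<lambda>x. cex b x - poly P x) + b ^ 4)"
      by (rule cex_approximation_error[where N = "n + 5", OF markov])
        (use that \<open>b > 0\<close> \<open>b \<le> 1\<close> in auto)
    then have "96 * A * b ^ 3 < sup_norm11 (\<lambda>x. cex b x - poly P x)"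
      using \<open>K > 0\<close> \<open>b > 0\<close> \<open>b \<le> 1\<close> \<open>b * (8 * K * (1 + 96 * A)) \<le> 1\<close> assms
      by (intro small_scale_gap) auto
    moreover have "A * omega4 (cex'' b) 1 \<le> A * (96 * b ^ 3)"
      using omega4_cex''[OF \<open>b > 0\<close>] assms by simp
    ultimately show ?thesis
      by simp
  qed
  show ?thesis
    by (rule exI[of _ "cex b"], rule exI[of _ "cex' b"], rule exI[of _ "cex'' b"])
      (use error_gt C2_on11_cex cex_nonpos cex_nonneg \<open>b > 0\<close> in auto)
qed

end
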